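(* Let $P = \{\boldsymbol{p}_1, \dots, \boldsymbol{p}_N\} \subset [0,1)^d$ be a $(t,m,d)$-net in base $b$. Let $\boldsymbol{\sigma}=(\sigma_1,\ldots,\sigma_d)$ be a $d$-tuple of mutually independent random $b$-ary scramblings of depth $\ell = m-t$, each of the form $$\sigma(x) = \sum_{j=1}^{\ell} \pi_{\xi_1,\ldots,\xi_{j-1}}(\xi_j) b^{-j} + y_x b^{-\ell},$$ where for each $j\in [1..d]$ all random permutations employed by $\sigma_j$ have single-fold uniformity and all families of random permutations that scramble different digits are mutually independent. Then $(\boldsymbol{\sigma}(\boldsymbol{p}_i))_{i=1}^N$, with $\boldsymbol{\sigma}(\boldsymbol{p}) := (\sigma_1(p_1), \ldots, \sigma_d(p_d))$, is an abstract scrambled $(t,m,d)$-net in base $b$. The statement holds, in particular, if each $\sigma_j$, $j=1,\ldots,d$, is a nested or positional (i) uniform or (ii) linear or (iii) digit shift $b$-ary random scrambling of depth $m-t$, or an affine matrix $b$-ary random scrambling of depth $m-t$.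
   Context: Fix integers $d,b\ge 2$, $m\ge t\ge 0$, $N=b^m$. An elementary interval in base $b$ of order $m-t$ is a set $\prod_{i=1}^d [k_i b^{-\ell_i},(k_i+1)b^{-\ell_i})\subseteq[0,1)^d$ with nonnegative integers $\ell_i$, $k_i<b^{\ell_i}$, of volume $b^{-(m-t)}$. An $N$-point multiset in $[0,1)^d$ is a $(t,m,d)$-net in base $b$ if every elementary interval in base $b$ of order $m-t$ contains exactly $b^t$ of its points. A basic cube is a set $\prod_{j=1}^d [k_j b^{-(m-t)},(k_j+1)b^{-(m-t)})$ with $k_j\in[0..b^{m-t}-1]$. A tuple ${\bf Y}=(Y_i)_{i=1}^N$ of random points in $[0,1)^d$ is an abstract scrambled $(t,m,d)$-net in base $b$ if (i) with probability one it is a $(t,m,d)$-net in base $b$; (ii) for each $i$ and each basic cube $C$, ${\mathbb{P}}(Y_i\in C)=b^{-d(m-t)}$; (iii) for all measurable $M\subseteq[0,1)^d$, all $\emptyset\ne J\subseteq[1..N]$ and all families of basic cubes $(C_j)_{j\in J}$ with ${\mathbb{P}}(\forall j\in J: Y_j\in C_j)>0$, ${\mathbb{P}}(\forall j\in J: Y_j\in M \mid \forall j\in J: Y_j\in C_j)=\prod_{j\in J}\lambda^d(M\cap C_j)/\lambda^d(C_j)$. In the scrambling formula, $x=\sum_{j\ge1}\xi_j b^{-j}$ is the $b$-ary expansion of $x\in[0,1)$ (with infinitely many digits $\xi_j\ne b-1$), each $\pi_{\xi_1,\ldots,\xi_{j-1}}$ is a random permutation of $\{0,1,\ldots,b-1\}$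 (which may depend on the first $j-1$ digits of $x$), and when mapping a finite multiset $(x^{(n)})_{n=1}^N$ the values $y_{x^{(n)}}\in[0,1)$ are chosen uniformly at random and independently for distinct $n$ (even if $x^{(i)}=x^{(j)}$). A random permutation $\pi$ of $\{0,\ldots,b-1\}$ has single-fold uniformity if ${\mathbb{P}}(\pi(i)=j)=1/b$ for all $i,j$. Nested scrambling: the permutation for digit $j$ depends on all previous digits $\xi_1,\ldots,\xi_{j-1}$, all permutations chosen independently; positional scrambling: one permutation $\pi_j$ per digit position $j$, independent of previous digits. "Uniform", "linear", "digit shift" mean the permutations are drawn uniformly from all permutations, all linear permutations, or all digital shifts of $\{0,\ldots,b-1\}$, respectively. Affine matrix scrambling of depth $\ell$: for $k=1,\ldots,\ell$ the $k$th digit of $\sigma(x)$ is $h_{k,k}\xi_k+\sum_{j<k}h_{k,j}\xi_j+g_k$ (mod $b$), with $h_{k,k}\in\{1,\ldots,b-1\}$, $h_{k,j},g_k\in\{0,\ldots,b-1\}$ uniform and mutually independent. *)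

theory Defs
  imports "HOL-Probability.Probability"
begin

text \<open>The j-th b-ary digit (j >= 1) of x in [0,1), taken from the expansion with
  infinitely many digits different from b-1 (i.e. the greedy expansion).\<close>
definition digit :: "nat \<Rightarrow> real \<Rightarrow> nat \<Rightarrow> nat" where
  "digit b x j = nat (\<lfloor>x * real b ^ j\<rfloor> mod int b)"

definition digit_prefix :: "nat \<Rightarrow> real \<Rightarrow> nat \<Rightarrow> nat list" where
  "digit_prefix b x j = map (digit b x) [1..<Suc j]"

definition scramble :: "nat \<Rightarrow> nat \<Rightarrow> (nat list \<Rightarrow> nat \<Rightarrow> nat) \<Rightarrow> real \<Rightarrow> real \<Rightarrow> real" where
  "scramble b l \<pi> y x =
     (\<Sum>j=1..l. real (\<pi> (digit_prefix b x (j - 1)) (digit b x j)) / real b ^ j) + y / real b ^ l"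

definition unit_cube :: "(real ^ 'd) set" where
  "unit_cube = {x. \<forall>i. 0 \<le> x $ i \<and> x $ i < 1}"

definition elem_box :: "nat \<Rightarrow> ('d \<Rightarrow> nat) \<Rightarrow> ('d \<Rightarrow> nat) \<Rightarrow> (real ^ 'd) set" where
  "elem_box b l k = {x. \<forall>i. real (k i) / real b ^ l i \<le> x $ i \<and> x $ i < (real (k i) + 1) / real b ^ l i}"

definition elementary_interval :: "nat \<Rightarrow> nat \<Rightarrow> (real ^ 'd) set \<Rightarrow> bool" where
  "elementary_interval b r E \<longleftrightarrow>
     (\<exists>l k. (\<forall>i. k i < b ^ l i) \<and> (\<Sum>i\<in>UNIV. l i) = r \<and> E = elem_box b l k)"

definition is_net :: "nat \<Rightarrow> nat \<Rightarrow> nat \<Rightarrow> (nat \<Rightarrow> real ^ 'd) \<Rightarrow> bool" where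
  "is_net b t m P \<longleftrightarrow>
     (\<forall>i<b ^ m. P i \<in> unit_cube) \<and>
     (\<forall>E. elementary_interval b (m - t) E \<longrightarrow> card {i\<in>{..<b ^ m}. P i \<in> E} = b ^ t)"

definition basic_cube :: "nat \<Rightarrow> nat \<Rightarrow> nat \<Rightarrow> (real ^ 'd) set \<Rightarrow> bool" where
  "basic_cube b t m C \<longleftrightarrow> (\<exists>k. (\<forall>i. k i < b ^ (m - t)) \<and> C = elem_box b (\<lambda>_. m - t) k)"

definition abstract_scrambled_net ::
    "'a measure \<Rightarrow> nat \<Rightarrow> nat \<Rightarrow> nat \<Rightarrow> (nat \<Rightarrow> 'a \<Rightarrow> real ^ 'd) \<Rightarrow> bool" where
  "abstract_scrambled_net M b t m Y \<longleftrightarrow>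
     (\<forall>i<b ^ m. Y i \<in> borel_measurable M \<and> (\<forall>\<omega>\<in>space M. Y i \<omega> \<in> unit_cube)) \<and>
     (AE \<omega> in M. is_net b t m (\<lambda>i. Y i \<omega>)) \<and>
     (\<forall>i<b ^ m. \<forall>C. basic_cube b t m C \<longrightarrow>
        measure M {\<omega>\<in>space M. Y i \<omega> \<in> C} = 1 / real b ^ (CARD('d) * (m - t))) \<and>
     (\<forall>A\<in>sets lborel. \<forall>J C. J \<noteq> {} \<longrightarrow> J \<subseteq> {..<b ^ m} \<longrightarrow>
        (\<forall>j\<in>J. basic_cube b t m (C j)) \<longrightarrow>
        measure M {\<omega>\<in>space M. \<forall>j\<in>J. Y j \<omega> \<in> C j} > 0 \<longrightarrow>
        measure M {\<omega>\<in>space M. \<forall>j\<in>J. Y j \<omega> \<in> A \<inter> C j}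
          / measure M {\<omega>\<in>space M. \<forall>j\<in>J. Y j \<omega> \<in> C j}
        = (\<Prod>j\<in>J. measure lborel (A \<inter> C j) / measure lborel (C j)))"

text \<open>The family of permutations used for digit j+1 (i.e. indexed by prefixes of length j),
  restricted to the relevant finite domain (digit prefixes over {0..b-1}, arguments < b).\<close>
definition perm_family :: "nat \<Rightarrow> (nat list \<Rightarrow> nat \<Rightarrow> nat) \<Rightarrow> nat \<Rightarrow> nat list \<Rightarrow> nat \<Rightarrow> nat" where
  "perm_family b \<pi> j = (\<lambda>p i. if length p = j \<and> set p \<subseteq> {..<b} \<and> i < b then \<pi> p i else 0)"

end

(*
  A scrambling of depth l acts on the first L <= l digits of x as a bijection of the digit
  strings of length L, so it maps every b-adic interval of level L onto a b-adic interval of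
  the same level.  Coordinatewise, elementary intervals of order m - t are mapped onto
  elementary intervals of order m - t, and the net property holds for every outcome.

  The event that Y_i lies in a fixed basic cube says that, for every coordinate k and digit
  position j < m - t, the permutation used at position j maps the j-th digit of p_i to a
  prescribed digit.  These d(m - t) events are independent and have probability 1/b each.

  Given that the points Y_j (j in J) lie in fixed basic cubes, an event that depends on the
  permutations only, each Y_j is the corner of its cube plus b^-(m-t) times the vector
  (y_1 j, ..., y_d j).  These vectors are independent of the permutations and of each other
  and uniformly distributed on [0,1)^d, which yields the conditional uniformity.
*)

theory Submission
  imports Defs
begin

section \<open>b-adic digit strings\<close>

definition digit_strings :: "nat \<Rightarrow> nat \<Rightarrow> nat list set" where
  "digit_strings b n = {xs. length xs = n \<and> set xs \<subseteq> {..<b}}"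

lemma digit_strings_0 [simp]: "digit_strings b 0 = {[]}"
  by (auto simp: digit_strings_def)

lemma snoc_in_digit_strings_Suc [simp]:
  "xs @ [d] \<in> digit_strings b (Suc n) \<longleftrightarrow> xs \<in> digit_strings b n \<and> d < b"
  by (auto simp: digit_strings_def)

lemma digit_strings_SucE:
  assumes "ys \<in> digit_strings b (Suc n)"
  obtains xs d where "ys = xs @ [d]" "xs \<in> digit_strings b n" "d < b"
  using assms by (cases ys rule: rev_exhaust) (auto simp: digit_strings_def)

lemma take_in_digit_strings: "xs \<in> digit_strings b n \<Longrightarrow> L \<le> n \<Longrightarrow> take L xs \<in> digit_strings b L"
  by (auto simp: digit_strings_def dest: in_set_takeD)

lemma nth_digit_strings_less: "xs \<in> digit_strings b n \<Longrightarrow> j < n \<Longrightarrow> xs ! j < b"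
  using nth_mem by (fastforce simp: digit_strings_def)

definition nat_of_digits :: "nat \<Rightarrow> nat list \<Rightarrow> nat" where
  "nat_of_digits b xs = foldl (\<lambda>a d. a * b + d) 0 xs"

lemma nat_of_digits_Nil [simp]: "nat_of_digits b [] = 0"
  by (simp add: nat_of_digits_def)

lemma nat_of_digits_snoc [simp]: "nat_of_digits b (xs @ [d]) = nat_of_digits b xs * b + d"
  by (simp add: nat_of_digits_def)

lemma nat_of_digits_append:
  "nat_of_digits b (xs @ ys) = nat_of_digits b xs * b ^ length ys + nat_of_digits b ys"
  by (induction ys rule: rev_induct) (simp_all add: algebra_simps flip: append_assoc)

lemma nat_of_digits_less: "xs \<in> digit_strings b n \<Longrightarrow> nat_of_digits b xs < b ^ n"
proof (induction n arbitrary: xs)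
  case (Suc n)
  then obtain xs' d where xs: "xs = xs' @ [d]" "xs' \<in> digit_strings b n" "d < b"
    by (elim digit_strings_SucE)
  then have "nat_of_digits b xs' * b + d < (nat_of_digits b xs' + 1) * b"
    by simp
  also have "\<dots> \<le> b ^ n * b"
    using Suc.IH[OF xs(2)] by (intro mult_right_mono) auto
  finally show ?case
    using xs(1) by (simp add: mult.commute)
qed simp

lemma inj_on_nat_of_digits: "inj_on (nat_of_digits b) (digit_strings b n)"
proof (induction n)
  case (Suc n)
  show ?case
  proof (rule inj_onI)
    fix xs ys assume "xs \<in> digit_strings b (Suc n)" "ys \<in> digit_strings b (Suc n)"
      and eq: "nat_of_digits b xs = nat_of_digits b ys"
    then obtain xs' d ys' e where
      xs: "xs = xs' @ [d]" "xs' \<in> digit_strings b n" "d < b" and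
      ys: "ys = ys' @ [e]" "ys' \<in> digit_strings b n" "e < b"
      by (metis digit_strings_SucE)
    have val: "nat_of_digits b xs' * b + d = nat_of_digits b ys' * b + e"
      using eq xs ys by simp
    then have "d = e"
      using arg_cong[OF val, of "\<lambda>n. n mod b"] \<open>d < b\<close> \<open>e < b\<close> by (metis mod_less mod_mult_self3)
    moreover have "nat_of_digits b xs' = nat_of_digits b ys'"
      using val \<open>d < b\<close> calculation by simp
    ultimately show "xs = ys"
      using xs ys inj_onD[OF Suc.IH] by simp
  qed
qed simp

lemma nat_of_digits_surj:
  assumes "b > 0" "K < b ^ n"
  obtains xs where "xs \<in> digit_strings b n" "nat_of_digits b xs = K"
  using assms(2)
proof (induction n arbitrary: K thesis)
  case (Suc n)
  have "K div b < b ^ n"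
    using Suc.prems(2) assms(1) by (simp add: div_less_iff_less_mult mult.commute)
  then obtain xs where "xs \<in> digit_strings b n" "nat_of_digits b xs = K div b"
    using Suc.IH by blast
  then show ?case
    using Suc.prems(1)[of "xs @ [K mod b]"] assms(1) by simp
qed simp

definition scramble_digits :: "(nat list \<Rightarrow> nat \<Rightarrow> nat) \<Rightarrow> nat list \<Rightarrow> nat list" where
  "scramble_digits \<pi> xs = map (\<lambda>j. \<pi> (take j xs) (xs ! j)) [0..<length xs]"

lemma scramble_digits_Nil [simp]: "scramble_digits \<pi> [] = []"
  by (simp add: scramble_digits_def)

lemma scramble_digits_snoc [simp]:
  "scramble_digits \<pi> (xs @ [d]) = scramble_digits \<pi> xs @ [\<pi> xs d]"
  by (auto simp: scramble_digits_def nth_append intro!: map_cong)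

lemma take_scramble_digits: "take L (scramble_digits \<pi> xs) = scramble_digits \<pi> (take L xs)"
  by (auto simp: scramble_digits_def take_map min_def intro!: map_cong)

definition perm_tree :: "nat \<Rightarrow> nat \<Rightarrow> (nat list \<Rightarrow> nat \<Rightarrow> nat) \<Rightarrow> bool" where
  "perm_tree b l \<pi> \<longleftrightarrow> (\<forall>n<l. \<forall>p\<in>digit_strings b n. bij_betw (\<pi> p) {..<b} {..<b})"

lemma bij_betw_scramble_digits:
  assumes "perm_tree b l \<pi>" "n \<le> l"
  shows "bij_betw (scramble_digits \<pi>) (digit_strings b n) (digit_strings b n)"
  using assms(2)
proof (induction n)
  case (Suc n)
  then have IH: "bij_betw (scramble_digits \<pi>) (digit_strings b n) (digit_strings b n)"
    by simp
  have perm: "bij_betw (\<pi> xs) {..<b} {..<b}" if "xs \<in> digit_strings b n" for xs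
    using assms(1) Suc.prems that unfolding perm_tree_def by (simp add: Suc_le_eq)
  show ?case
    unfolding bij_betw_def
  proof (intro conjI inj_onI equalityI subsetI)
    fix xs ys assume "xs \<in> digit_strings b (Suc n)" "ys \<in> digit_strings b (Suc n)"
      and eq: "scramble_digits \<pi> xs = scramble_digits \<pi> ys"
    then obtain xs' d ys' e where
      xs: "xs = xs' @ [d]" "xs' \<in> digit_strings b n" "d < b" and
      ys: "ys = ys' @ [e]" "ys' \<in> digit_strings b n" "e < b"
      by (metis digit_strings_SucE)
    have "xs' = ys'"
      using eq xs ys bij_betw_imp_inj_on[OF IH] by (auto dest: inj_onD)
    moreover have "d = e"
      using eq xs ys calculation bij_betw_imp_inj_on[OF perm[OF xs(2)]] by (auto dest: inj_onD)
    ultimately show "xs = ys"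
      using xs ys by simp
  next
    fix zs assume "zs \<in> scramble_digits \<pi> ` digit_strings b (Suc n)"
    then obtain xs' d where "zs = scramble_digits \<pi> (xs' @ [d])" "xs' \<in> digit_strings b n" "d < b"
      by (auto elim: digit_strings_SucE)
    then show "zs \<in> digit_strings b (Suc n)"
      using bij_betwE[OF IH] bij_betwE[OF perm] by simp
  next
    fix zs assume "zs \<in> digit_strings b (Suc n)"
    then obtain zs' e where zs: "zs = zs' @ [e]" "zs' \<in> digit_strings b n" "e < b"
      by (elim digit_strings_SucE)
    then obtain xs' where xs': "xs' \<in> digit_strings b n" "scramble_digits \<pi> xs' = zs'"
      using bij_betw_imp_surj_on[OF IH] by (metis imageE)
    then obtain d where "d < b" "\<pi> xs' d = e"
      using bij_betw_imp_surj_on[OF perm[OF xs'(1)]] zs(3) by (metis imageE lessThan_iff)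
    then show "zs \<in> scramble_digits \<pi> ` digit_strings b (Suc n)"
      using xs' zs by (intro image_eqI[of _ _ "xs' @ [d]"]) auto
  qed
qed (simp add: bij_betw_def)

section \<open>Scramblings of real numbers\<close>

lemma digit_less: "b > 0 \<Longrightarrow> digit b x j < b"
  unfolding digit_def by (simp add: nat_less_iff)

lemma digit_prefix_Suc: "digit_prefix b x (Suc n) = digit_prefix b x n @ [digit b x (Suc n)]"
  by (simp add: digit_prefix_def)

lemma digit_prefix_in_digit_strings: "b > 0 \<Longrightarrow> digit_prefix b x n \<in> digit_strings b n"
  by (auto simp: digit_prefix_def digit_strings_def digit_less)

lemma take_digit_prefix: "L \<le> n \<Longrightarrow> take L (digit_prefix b x n) = digit_prefix b x L"
  by (simp add: digit_prefix_def take_map del: upt_Suc)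

lemma floor_mult_power_eq_nat_of_digits:
  assumes "b > 0" "x \<in> {0..<1}"
  shows "\<lfloor>x * real b ^ n\<rfloor> = int (nat_of_digits b (digit_prefix b x n))"
proof (induction n)
  case 0
  then show ?case
    using assms(2) by (simp add: digit_prefix_def floor_eq_iff)
next
  case (Suc n)
  define F where "F = \<lfloor>x * real b ^ Suc n\<rfloor>"
  have "\<lfloor>x * real b ^ n\<rfloor> = \<lfloor>x * real b ^ Suc n / real_of_int (int b)\<rfloor>"
    using assms(1) by simp
  also have "\<dots> = F div int b"
    unfolding F_def by (rule floor_divide_real_eq_div) simp
  finally have "F div int b = int (nat_of_digits b (digit_prefix b x n))"
    using Suc by simp
  moreover have "F mod int b = int (digit b x (Suc n))"
    using assms by (simp add: digit_def F_def)
  ultimately have "F = int (nat_of_digits b (digit_prefix b x n)) * int b + int (digit b x (Suc n))"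
    by (metis div_mult_mod_eq)
  then show ?case
    unfolding F_def by (simp add: digit_prefix_Suc)
qed

definition adic_interval :: "nat \<Rightarrow> nat \<Rightarrow> nat \<Rightarrow> real set" where
  "adic_interval b n K = {real K / real b ^ n ..< (real K + 1) / real b ^ n}"

lemma elem_box_eq: "elem_box b l k = {x. \<forall>i. x $ i \<in> adic_interval b (l i) (k i)}"
  by (simp add: elem_box_def adic_interval_def)

lemma mem_adic_interval_iff_floor:
  assumes "b > 0"
  shows "x \<in> adic_interval b n K \<longleftrightarrow> \<lfloor>x * real b ^ n\<rfloor> = int K"
proof -
  have "x \<in> adic_interval b n K \<longleftrightarrow> real K \<le> x * real b ^ n \<and> x * real b ^ n < real K + 1"
    using assms by (simp add: adic_interval_def field_simps)
  then show ?thesis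
    by (simp add: floor_eq_iff)
qed

lemma mem_adic_interval_iff_digit_prefix:
  assumes "b > 0" "x \<in> {0..<1}" "q \<in> digit_strings b n"
  shows "x \<in> adic_interval b n (nat_of_digits b q) \<longleftrightarrow> digit_prefix b x n = q"
  using assms floor_mult_power_eq_nat_of_digits[OF assms(1,2)] mem_adic_interval_iff_floor[OF assms(1)]
    inj_onD[OF inj_on_nat_of_digits] digit_prefix_in_digit_strings
  by (metis of_nat_eq_iff)

lemma sum_digits_eq_nat_of_digits:
  assumes "b > 0"
  shows "(\<Sum>j=1..n. real (e j) / real b ^ j) = real (nat_of_digits b (map e [1..<Suc n])) / real b ^ n"
proof (induction n)
  case (Suc n)
  have "[1..<Suc (Suc n)] = [1..<Suc n] @ [Suc n]"
    by simp
  with Suc show ?case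
    using assms by (simp del: upt_Suc add: field_simps)
qed simp

lemma scramble_digits_digit_prefix:
  "scramble_digits \<pi> (digit_prefix b x n) = map (\<lambda>j. \<pi> (digit_prefix b x (j - 1)) (digit b x j)) [1..<Suc n]"
proof (induction n)
  case (Suc n)
  have "[1..<Suc (Suc n)] = [1..<Suc n] @ [Suc n]"
    by simp
  then show ?case
    using Suc by (simp del: upt_Suc add: digit_prefix_Suc)
qed (simp add: digit_prefix_def)

lemma scramble_eq:
  assumes "b > 0"
  shows "scramble b l \<pi> z x = (real (nat_of_digits b (scramble_digits \<pi> (digit_prefix b x l))) + z) / real b ^ l"
  unfolding scramble_def scramble_digits_digit_prefix sum_digits_eq_nat_of_digits[OF assms]
  by (simp add: add_divide_distrib)

lemma fraction_mem_adic_interval: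
  assumes "b > 0" "ds \<in> digit_strings b n" "L \<le> n" "z \<in> {0..<1}"
  shows "(real (nat_of_digits b ds) + z) / real b ^ n \<in> adic_interval b L (nat_of_digits b (take L ds))"
proof -
  define r where "r = n - L"
  define A where "A = nat_of_digits b (take L ds)"
  define R where "R = nat_of_digits b (drop L ds)"
  have "drop L ds \<in> digit_strings b r"
    using assms(2) by (auto simp: digit_strings_def r_def dest: in_set_dropD)
  then have "R + 1 \<le> b ^ r"
    using nat_of_digits_less R_def by (simp add: Suc_le_eq)
  then have "real R + z < real b ^ r"
    using assms(4) by (auto simp flip: of_nat_power of_nat_Suc)
  then have Rz: "0 \<le> real R + z" "real b ^ L * (real R + z) < real b ^ L * real b ^ r"
    using assms(1,4) by auto
  have "nat_of_digits b ds = A * b ^ r + R"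
    using nat_of_digits_append[of b "take L ds" "drop L ds"] assms(2)
    by (simp add: A_def R_def r_def digit_strings_def)
  moreover have "real b ^ n = real b ^ L * real b ^ r"
    using assms(3) by (simp add: r_def flip: power_add)
  ultimately show ?thesis
    using Rz assms(1) unfolding adic_interval_def A_def[symmetric]
    by (simp add: field_simps)
qed

lemma scramble_mem_adic_interval_iff:
  assumes "perm_tree b l \<pi>" "b > 0" "x \<in> {0..<1}" "z \<in> {0..<1}" "L \<le> l" "q \<in> digit_strings b L"
  shows "scramble b l \<pi> z x \<in> adic_interval b L (nat_of_digits b q)
    \<longleftrightarrow> scramble_digits \<pi> (digit_prefix b x L) = q"
proof -
  let ?ds = "scramble_digits \<pi> (digit_prefix b x l)"
  have ds: "?ds \<in> digit_strings b l"
    using bij_betwE[OF bij_betw_scramble_digits[OF assms(1) order_refl]]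
      digit_prefix_in_digit_strings[OF assms(2)] by blast
  have "scramble b l \<pi> z x \<in> adic_interval b L (nat_of_digits b (take L ?ds))"
    unfolding scramble_eq[OF assms(2)] using fraction_mem_adic_interval ds assms by blast
  then have "scramble b l \<pi> z x \<in> adic_interval b L (nat_of_digits b q)
      \<longleftrightarrow> nat_of_digits b (take L ?ds) = nat_of_digits b q"
    using mem_adic_interval_iff_floor[OF assms(2)] by simp
  also have "\<dots> \<longleftrightarrow> take L ?ds = q"
    using inj_on_nat_of_digits[THEN inj_on_eq_iff] take_in_digit_strings[OF ds assms(5)] assms(6) by blast
  also have "take L ?ds = scramble_digits \<pi> (digit_prefix b x L)"
    using assms(5) by (simp add: take_scramble_digits take_digit_prefix)
  finally show ?thesis .
qed

lemma scramble_mem_scrambled_adic_interval_iff: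
  assumes "perm_tree b l \<pi>" "b > 0" "x \<in> {0..<1}" "z \<in> {0..<1}" "L \<le> l" "q \<in> digit_strings b L"
  shows "scramble b l \<pi> z x \<in> adic_interval b L (nat_of_digits b (scramble_digits \<pi> q))
    \<longleftrightarrow> x \<in> adic_interval b L (nat_of_digits b q)"
proof -
  have bij: "bij_betw (scramble_digits \<pi>) (digit_strings b L) (digit_strings b L)"
    using bij_betw_scramble_digits assms(1,5) .
  have "scramble b l \<pi> z x \<in> adic_interval b L (nat_of_digits b (scramble_digits \<pi> q))
      \<longleftrightarrow> scramble_digits \<pi> (digit_prefix b x L) = scramble_digits \<pi> q"
    using scramble_mem_adic_interval_iff assms bij_betwE[OF bij] by blast
  also have "\<dots> \<longleftrightarrow> digit_prefix b x L = q"
    using bij_betw_imp_inj_on[OF bij, THEN inj_on_eq_iff] digit_prefix_in_digit_strings assms(2,6)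
    by blast
  finally show ?thesis
    using mem_adic_interval_iff_digit_prefix assms(2,3,6) by blast
qed

lemma scramble_in_unit_interval:
  assumes "perm_tree b l \<pi>" "b > 0" "x \<in> {0..<1}" "z \<in> {0..<1}"
  shows "scramble b l \<pi> z x \<in> {0..<1}"
  using scramble_mem_adic_interval_iff[OF assms, of 0 "[]"] by (simp add: adic_interval_def digit_prefix_def)

lemma elementary_interval_vimage_scramble:
  fixes \<pi> :: "'d::finite \<Rightarrow> nat list \<Rightarrow> nat \<Rightarrow> nat"
  assumes "b > 0" and perms: "\<And>k. perm_tree b (m - t) (\<pi> k)"
    and E: "elementary_interval b (m - t) (E :: (real ^ 'd) set)"
  obtains E' where "elementary_interval b (m - t) E'"
    "\<And>x z. x \<in> unit_cube \<Longrightarrow> (\<And>k. z k \<in> {0..<1}) \<Longrightarrow>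
       (\<chi> k. scramble b (m - t) (\<pi> k) (z k) (x $ k)) \<in> E \<longleftrightarrow> x \<in> E'"
proof -
  obtain L K where LK: "\<And>k. K k < b ^ L k" "(\<Sum>k\<in>UNIV. L k) = m - t" "E = elem_box b L K"
    using E unfolding elementary_interval_def by blast
  have L: "L k \<le> m - t" for k
    using member_le_sum[of k UNIV L] LK(2) by simp
  have "\<exists>q\<in>digit_strings b (L k). nat_of_digits b (scramble_digits (\<pi> k) q) = K k" for k
  proof -
    obtain ds where "ds \<in> digit_strings b (L k)" "nat_of_digits b ds = K k"
      using nat_of_digits_surj assms(1) LK(1) by metis
    then show ?thesis
      using bij_betw_imp_surj_on[OF bij_betw_scramble_digits[OF perms L]] by (metis imageE)
  qed
  then obtain q where q: "\<And>k. q k \<in> digit_strings b (L k)"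
    "\<And>k. nat_of_digits b (scramble_digits (\<pi> k) (q k)) = K k"
    by metis
  show ?thesis
  proof
    show "elementary_interval b (m - t) (elem_box b L (\<lambda>k. nat_of_digits b (q k)))"
      unfolding elementary_interval_def using nat_of_digits_less[OF q(1)] LK(2)
      by (intro exI[of _ L] exI[of _ "\<lambda>k. nat_of_digits b (q k)"]) simp
    fix x :: "real ^ 'd" and z :: "'d \<Rightarrow> real" assume "x \<in> unit_cube" "\<And>k. z k \<in> {0..<1}"
    then have "scramble b (m - t) (\<pi> k) (z k) (x $ k) \<in> adic_interval b (L k) (K k)
        \<longleftrightarrow> x $ k \<in> adic_interval b (L k) (nat_of_digits b (q k))" for k
      using scramble_mem_scrambled_adic_interval_iff[OF perms assms(1) _ _ L q(1)]
      by (simp add: q(2)[symmetric] unit_cube_def)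
    then show "(\<chi> k. scramble b (m - t) (\<pi> k) (z k) (x $ k)) \<in> E
        \<longleftrightarrow> x \<in> elem_box b L (\<lambda>k. nat_of_digits b (q k))"
      unfolding LK(3) elem_box_eq by simp
  qed
qed

lemma is_net_scramble:
  fixes P :: "nat \<Rightarrow> real ^ 'd" and \<pi> :: "'d \<Rightarrow> nat list \<Rightarrow> nat \<Rightarrow> nat" and z :: "'d \<Rightarrow> nat \<Rightarrow> real"
  assumes "b > 0" and net: "is_net b t m P" and perms: "\<And>k. perm_tree b (m - t) (\<pi> k)"
    and z: "\<And>k i. i < b ^ m \<Longrightarrow> z k i \<in> {0..<1}"
  shows "is_net b t m (\<lambda>i. \<chi> k. scramble b (m - t) (\<pi> k) (z k i) (P i $ k))"
proof -
  let ?Y = "\<lambda>i. \<chi> k. scramble b (m - t) (\<pi> k) (z k i) (P i $ k)"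
  have P: "P i \<in> unit_cube" if "i < b ^ m" for i
    using net that unfolding is_net_def by auto
  have "?Y i \<in> unit_cube" if "i < b ^ m" for i
    using scramble_in_unit_interval[OF perms assms(1) _ z[OF that]] P[OF that]
    by (simp add: unit_cube_def)
  moreover have "card {i\<in>{..<b ^ m}. ?Y i \<in> E} = b ^ t" if E: "elementary_interval b (m - t) E" for E
  proof -
    obtain E' where E': "elementary_interval b (m - t) E'" and iff: "\<And>x z. x \<in> unit_cube \<Longrightarrow>
        (\<And>k. z k \<in> {0..<1}) \<Longrightarrow> (\<chi> k. scramble b (m - t) (\<pi> k) (z k) (x $ k)) \<in> E \<longleftrightarrow> x \<in> E'"
      using elementary_interval_vimage_scramble[where \<pi>=\<pi>, OF assms(1) perms E] by blast
    have "?Y i \<in> E \<longleftrightarrow> P i \<in> E'" if "i < b ^ m" for i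
      using iff[OF P[OF that] z[OF that]] .
    then have "{i\<in>{..<b ^ m}. ?Y i \<in> E} = {i\<in>{..<b ^ m}. P i \<in> E'}"
      by auto
    with E' show ?thesis
      using net unfolding is_net_def by simp
  qed
  ultimately show ?thesis
    unfolding is_net_def by blast
qed

lemma basic_cubeE:
  assumes "b > 0" "basic_cube b t m C"
  obtains Q where "\<And>k. Q k \<in> digit_strings b (m - t)"
    "C = elem_box b (\<lambda>_. m - t) (\<lambda>k. nat_of_digits b (Q k))"
proof -
  obtain K where K: "\<And>k. K k < b ^ (m - t)" "C = elem_box b (\<lambda>_. m - t) K"
    using assms(2) unfolding basic_cube_def by blast
  have "\<exists>q\<in>digit_strings b (m - t). nat_of_digits b q = K k" for k
    using nat_of_digits_surj[OF assms(1) K(1)] by metis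
  then obtain Q where Q: "\<And>k. Q k \<in> digit_strings b (m - t)" "\<And>k. nat_of_digits b (Q k) = K k"
    by metis
  show ?thesis
    using that[of Q] Q K(2) by simp
qed

lemma scramble_digits_eq_iff_perm_family:
  assumes "xs \<in> digit_strings b n" "length q = n"
  shows "scramble_digits f xs = q \<longleftrightarrow> (\<forall>j<n. perm_family b f j (take j xs) (xs ! j) = q ! j)"
proof -
  have "perm_family b f j (take j xs) (xs ! j) = f (take j xs) (xs ! j)" if "j < n" for j
    using that assms(1) take_in_digit_strings[OF assms(1), of j] nth_digit_strings_less[OF assms(1)]
    by (simp add: perm_family_def digit_strings_def)
  then show ?thesis
    using assms by (auto simp: list_eq_iff_nth_eq scramble_digits_def digit_strings_def)
qed

section \<open>Independence and uniform distributions on boxes\<close>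

lemma (in prob_space) prob_Collect_All_indep_sets:
  assumes "indep_sets F I" "inj_on g J" "g ` J \<subseteq> I" "finite J"
    and "\<And>j. j \<in> J \<Longrightarrow> {\<omega>\<in>space M. \<Phi> j \<omega>} \<in> F (g j)"
  shows "prob {\<omega>\<in>space M. \<forall>j\<in>J. \<Phi> j \<omega>} = (\<Prod>j\<in>J. prob {\<omega>\<in>space M. \<Phi> j \<omega>})"
proof (cases "J = {}")
  case False
  define A where "A i = {\<omega>\<in>space M. \<Phi> (the_inv_into J g i) \<omega>}" for i
  have A: "A (g j) = {\<omega>\<in>space M. \<Phi> j \<omega>}" if "j \<in> J" for j
    using the_inv_into_f_f[OF assms(2) that] by (simp add: A_def)
  have "{\<omega>\<in>space M. \<forall>j\<in>J. \<Phi> j \<omega>} = (\<Inter>i\<in>g ` J. A i)"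
    using False A by auto
  also have "prob \<dots> = (\<Prod>i\<in>g ` J. prob (A i))"
    using False assms(4,5) A by (intro indep_setsD[OF assms(1,3)]) auto
  also have "\<dots> = (\<Prod>j\<in>J. prob {\<omega>\<in>space M. \<Phi> j \<omega>})"
    using A by (simp add: prod.reindex[OF assms(2)])
  finally show ?thesis .
qed (simp add: prob_space)

lemma Int_stable_vimage_family:
  assumes "\<And>A B. A \<in> S \<Longrightarrow> B \<in> S \<Longrightarrow> A \<inter> B \<in> S"
  shows "Int_stable {f -` A \<inter> \<Omega> | A. A \<in> S}"
proof (rule Int_stableI)
  fix a c assume "a \<in> {f -` A \<inter> \<Omega> | A. A \<in> S}" "c \<in> {f -` A \<inter> \<Omega> | A. A \<in> S}"
  then obtain A B where "a = f -` A \<inter> \<Omega>" "c = f -` B \<inter> \<Omega>" "A \<in> S" "B \<in> S"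
    by blast
  then have "a \<inter> c = f -` (A \<inter> B) \<inter> \<Omega>" "A \<inter> B \<in> S"
    using assms by auto
  then show "a \<inter> c \<in> {f -` A \<inter> \<Omega> | A. A \<in> S}"
    by blast
qed

lemma borel_measurable_vec_lambda:
  fixes f :: "'d::finite \<Rightarrow> 'a \<Rightarrow> real"
  assumes "\<And>k. f k \<in> borel_measurable M"
  shows "(\<lambda>\<omega>. \<chi> k. f k \<omega>) \<in> borel_measurable M"
proof (rule borel_measurable_euclidean_space[THEN iffD2], rule ballI)
  fix i :: "real^'d" assume "i \<in> Basis"
  then obtain k where i: "i = axis k 1"
    unfolding Basis_vec_def by auto
  have "(\<lambda>\<omega>. (\<chi> k. f k \<omega>) \<bullet> i) = f k"
    unfolding i inner_axis by (simp add: fun_eq_iff)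
  then show "(\<lambda>\<omega>. (\<chi> k. f k \<omega>) \<bullet> i) \<in> borel_measurable M"
    using assms by simp
qed

lemma emeasure_lborel_Ico_box_cart:
  fixes lo hi :: "'d::finite \<Rightarrow> real"
  assumes "\<And>k. lo k \<le> hi k"
  shows "emeasure lborel {x::real^'d. \<forall>k. x $ k \<in> {lo k..<hi k}} = ennreal (\<Prod>k\<in>UNIV. hi k - lo k)"
proof -
  define a :: "real^'d" where "a = (\<chi> k. lo k)"
  define c :: "real^'d" where "c = (\<chi> k. hi k)"
  let ?S = "{x::real^'d. \<forall>k. x $ k \<in> {lo k..<hi k}}"
  have "emeasure lborel ?S = emeasure lborel (cbox a c)"
  proof (rule order.antisym)
    have "?S \<subseteq> cbox a c"
    proof
      fix x assume "x \<in> ?S"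
      then have "lo k \<le> x $ k \<and> x $ k \<le> hi k" for k
        using less_imp_le[of "x $ k" "hi k"] by simp
      then show "x \<in> cbox a c"
        by (simp add: a_def c_def mem_box_cart)
    qed
    then show "emeasure lborel ?S \<le> emeasure lborel (cbox a c)"
      by (rule emeasure_mono) measurable
    have "box a c \<subseteq> ?S"
      by (auto simp: a_def c_def mem_box_cart intro: less_imp_le)
    then have "emeasure lborel (box a c) \<le> emeasure lborel ?S"
      by (rule emeasure_mono) measurable
    then show "emeasure lborel (cbox a c) \<le> emeasure lborel ?S"
      by (simp only: emeasure_lborel_box_eq emeasure_lborel_cbox_eq)
  qed
  also have "\<dots> = ennreal (measure lborel (cbox a c))"
    using emeasure_lborel_cbox_finite[of a c] by (intro emeasure_eq_ennreal_measure) simp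
  also have "measure lborel (cbox a c) = (\<Prod>k\<in>UNIV. hi k - lo k)"
    using assms by (subst content_cbox_cart) (auto simp: a_def c_def interval_cart intro!: exI[of _ a])
  finally show ?thesis .
qed

lemma sets_borel_cart_eq_sigma_orthants:
  "sets (borel :: (real^'d::finite) measure) = sigma_sets UNIV (range (\<lambda>a::'d \<Rightarrow> real. {x::real^'d. \<forall>k. x $ k < a k}))"
proof -
  let ?orthant = "\<lambda>a::'d \<Rightarrow> real. {x::real^'d. \<forall>k. x $ k < a k}"
  have "{x::real^'d. eucl_less x a} = ?orthant (vec_nth a)" for a
    by (auto simp: eucl_less_def Basis_vec_def inner_axis)
  then have "range (\<lambda>a::real^'d. {x. eucl_less x a}) = ?orthant ` range vec_nth"
    by (auto simp: image_image)
  also have "range vec_nth = (UNIV :: ('d \<Rightarrow> real) set)"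
    by (metis surjI vec_lambda_inverse UNIV_I)
  finally show ?thesis
    by (subst borel_eq_lessThan) simp
qed

lemma Int_stable_orthants: "Int_stable (range (\<lambda>a::'d \<Rightarrow> real. {x::real^'d::finite. \<forall>k. x $ k < a k}))"
proof (rule Int_stableI)
  fix A B assume "A \<in> range (\<lambda>a::'d \<Rightarrow> real. {x::real^'d. \<forall>k. x $ k < a k})"
    "B \<in> range (\<lambda>a::'d \<Rightarrow> real. {x::real^'d. \<forall>k. x $ k < a k})"
  then obtain a a' where "A = {x. \<forall>k. x $ k < a k}" "B = {x. \<forall>k. x $ k < a' k}"
    by auto
  then have "A \<inter> B = {x. \<forall>k. x $ k < min (a k) (a' k)}"
    by auto
  then show "A \<inter> B \<in> range (\<lambda>a::'d \<Rightarrow> real. {x::real^'d. \<forall>k. x $ k < a k})"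
    by (intro image_eqI[OF _ UNIV_I])
qed

lemma UN_orthants_nat: "(\<Union>n::nat. {x::real^'d::finite. \<forall>k. x $ k < real n}) = UNIV"
proof safe
  fix x :: "real^'d"
  obtain n :: nat where n: "(\<Sum>k\<in>UNIV. \<bar>x $ k\<bar>) < real n"
    using reals_Archimedean2 by blast
  have "x $ k < real n" for k
    using member_le_sum[of k UNIV "\<lambda>k. \<bar>x $ k\<bar>"] n by simp
  then show "x \<in> (\<Union>n::nat. {x::real^'d. \<forall>k. x $ k < real n})"
    by blast
qed simp

lemma (in prob_space) prob_uniform_lessThan:
  assumes "X \<in> borel_measurable M" "distr M lborel X = uniform_measure lborel {0..<1}"
  shows "prob {\<omega>\<in>space M. X \<omega> < v} = max 0 (min 1 v)"
proof -
  have "prob {\<omega>\<in>space M. X \<omega> < v} = measure (distr M lborel X) {..<v}"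
    using assms(1) by (subst measure_distr) (auto simp: vimage_def Int_def conj_commute)
  also have "\<dots> = measure lborel ({0..<1} \<inter> {..<v}) / measure lborel {0..<1::real}"
    unfolding assms(2) by (subst measure_uniform_measure) auto
  also have "{0..<1} \<inter> {..<v} = {0..<min 1 v}"
    by auto
  finally show ?thesis
    by (cases "0 \<le> min 1 v") auto
qed

lemma emeasure_uniform_Ico_box_orthant:
  fixes c a :: "'d::finite \<Rightarrow> real"
  assumes "\<delta> > 0"
  shows "emeasure (uniform_measure lborel {x::real^'d. \<forall>k. x $ k \<in> {c k..<c k + \<delta>}}) {x. \<forall>k. x $ k < a k}
       = ennreal (\<Prod>k\<in>UNIV. max 0 (min 1 ((a k - c k) / \<delta>)))"
proof -
  define hi where "hi k = max (c k) (min (a k) (c k + \<delta>))" for k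
  have hi: "c k \<le> hi k" "hi k \<le> c k + \<delta>" for k
    using assms by (auto simp: hi_def)
  have "(c k \<le> v \<and> v < c k + \<delta> \<and> v < a k) \<longleftrightarrow> (c k \<le> v \<and> v < hi k)" for k v
    by (auto simp: hi_def)
  then have "{x::real^'d. \<forall>k. x $ k \<in> {c k..<c k + \<delta>}} \<inter> {x. \<forall>k. x $ k < a k}
      = {x. \<forall>k. x $ k \<in> {c k..<hi k}}"
    by auto
  then have "emeasure (uniform_measure lborel {x::real^'d. \<forall>k. x $ k \<in> {c k..<c k + \<delta>}}) {x. \<forall>k. x $ k < a k}
      = emeasure lborel {x::real^'d. \<forall>k. x $ k \<in> {c k..<hi k}}
        / emeasure lborel {x::real^'d. \<forall>k. x $ k \<in> {c k..<c k + \<delta>}}"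
    by (subst emeasure_uniform_measure) measurable
  also have "\<dots> = ennreal (\<Prod>k\<in>UNIV. hi k - c k) / ennreal (\<Prod>k\<in>(UNIV::'d set). \<delta>)"
    using emeasure_lborel_Ico_box_cart[of c hi, OF hi(1)]
      emeasure_lborel_Ico_box_cart[of c "\<lambda>k. c k + \<delta>"] assms by simp
  also have "\<dots> = ennreal (\<Prod>k\<in>UNIV. (hi k - c k) / \<delta>)"
    using hi assms by (subst divide_ennreal) (auto intro: prod_nonneg simp: prod_dividef)
  also have "(\<lambda>k. (hi k - c k) / \<delta>) = (\<lambda>k. max 0 (min 1 ((a k - c k) / \<delta>)))"
    using assms by (auto simp: hi_def fun_eq_iff max_def min_def field_simps)
  finally show ?thesis .
qed

lemma (in prob_space) distr_vec_uniform_Ico_box: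
  fixes X :: "'d::finite \<Rightarrow> 'a \<Rightarrow> real" and c :: "'d \<Rightarrow> real"
  assumes "\<delta> > 0"
    and meas: "\<And>k. X k \<in> borel_measurable M"
    and unif: "\<And>k. distr M lborel (X k) = uniform_measure lborel {0..<1}"
    and indep: "\<And>B. (\<And>k. B k \<in> sets borel) \<Longrightarrow>
       prob {\<omega>\<in>space M. \<forall>k. X k \<omega> \<in> B k} = (\<Prod>k\<in>UNIV. prob {\<omega>\<in>space M. X k \<omega> \<in> B k})"
  shows "distr M borel (\<lambda>\<omega>. \<chi> k. c k + \<delta> * X k \<omega>)
           = uniform_measure lborel {x::real^'d. \<forall>k. x $ k \<in> {c k..<c k + \<delta>}}"
proof -
  let ?W = "\<lambda>\<omega>. \<chi> k. c k + \<delta> * X k \<omega>"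
  let ?orthant = "\<lambda>a::'d \<Rightarrow> real. {x::real^'d. \<forall>k. x $ k < a k}"
  have W: "?W \<in> borel_measurable M"
    using meas by (intro borel_measurable_vec_lambda) auto
  show ?thesis
  proof (rule measure_eqI_generator_eq_countable[where E="range ?orthant" and \<Omega>=UNIV
        and A="range (\<lambda>n::nat. ?orthant (\<lambda>_. real n))"])
    show "Int_stable (range ?orthant)"
      by (rule Int_stable_orthants)
    show "\<Union> (range (\<lambda>n::nat. ?orthant (\<lambda>_. real n))) = UNIV"
      by (rule UN_orthants_nat)
    show "emeasure (distr M borel ?W) A \<noteq> \<infinity>" for A
      using W by (cases "A \<in> sets borel") (simp_all add: emeasure_distr emeasure_notin_sets)
    fix Y assume "Y \<in> range ?orthant"
    then obtain a where Y: "Y = ?orthant a"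
      by auto
    have "?W -` Y \<inter> space M = {\<omega>\<in>space M. \<forall>k. X k \<omega> \<in> {..<(a k - c k) / \<delta>}}"
      using \<open>\<delta> > 0\<close> by (auto simp: Y field_simps)
    then have "emeasure (distr M borel ?W) Y = ennreal (prob {\<omega>\<in>space M. \<forall>k. X k \<omega> \<in> {..<(a k - c k) / \<delta>}})"
      using W by (simp add: Y emeasure_distr emeasure_eq_measure)
    also have "\<dots> = ennreal (\<Prod>k\<in>UNIV. max 0 (min 1 ((a k - c k) / \<delta>)))"
      using indep[of "\<lambda>k. {..<(a k - c k) / \<delta>}"] prob_uniform_lessThan[OF meas unif] by simp
    also have "\<dots> = emeasure (uniform_measure lborel {x::real^'d. \<forall>k. x $ k \<in> {c k..<c k + \<delta>}}) Y"
      unfolding Y by (rule emeasure_uniform_Ico_box_orthant[OF \<open>\<delta> > 0\<close>, symmetric])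
    finally show "emeasure (distr M borel ?W) Y = emeasure (uniform_measure lborel {x::real^'d. \<forall>k. x $ k \<in> {c k..<c k + \<delta>}}) Y" .
  qed (auto simp: sets_borel_cart_eq_sigma_orthants)
qed

section \<open>Random scramblings of a net\<close>

locale random_scrambling =
  fixes M :: "'a measure"
    and b t m :: nat
    and P :: "nat \<Rightarrow> real ^ 'd"
    and \<pi> :: "'d \<Rightarrow> 'a \<Rightarrow> nat list \<Rightarrow> nat \<Rightarrow> nat"
    and y :: "'d \<Rightarrow> nat \<Rightarrow> 'a \<Rightarrow> real"
  assumes M: "prob_space M"
    and b: "b > 0"
    and net: "is_net b t m P"
    and perm: "\<And>k \<omega> p. \<omega> \<in> space M \<Longrightarrow> length p < m - t \<Longrightarrow> set p \<subseteq> {..<b} \<Longrightarrow>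
           bij_betw (\<pi> k \<omega> p) {..<b} {..<b}"
    and perm_measurable: "\<And>k j. j < m - t \<Longrightarrow>
           (\<lambda>\<omega>. perm_family b (\<pi> k \<omega>) j) \<in> measurable M (count_space UNIV)"
    and single_fold: "\<And>k p i j. length p < m - t \<Longrightarrow> set p \<subseteq> {..<b} \<Longrightarrow> i < b \<Longrightarrow> j < b \<Longrightarrow>
           measure M {\<omega>\<in>space M. \<pi> k \<omega> p i = j} = 1 / real b"
    and y_range: "\<And>k n \<omega>. n < b ^ m \<Longrightarrow> \<omega> \<in> space M \<Longrightarrow> y k n \<omega> \<in> {0..<1}"
    and y_measurable: "\<And>k n. n < b ^ m \<Longrightarrow> y k n \<in> borel_measurable M"
    and y_uniform: "\<And>k n. n < b ^ m \<Longrightarrow> distr M lborel (y k n) = uniform_measure lborel {0..<1}"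
    and indep: "prob_space.indep_sets M
           (\<lambda>x. case x of
                   Inl (k, j) \<Rightarrow> {(\<lambda>\<omega>. perm_family b (\<pi> k \<omega>) j) -` A \<inter> space M | A. True}
                 | Inr (k, n) \<Rightarrow> {y k n -` B \<inter> space M | B. B \<in> sets borel})
           (Inl ` (UNIV \<times> {..<m - t}) \<union> Inr ` (UNIV \<times> {..<b ^ m}))"
begin

sublocale prob_space M
  by (rule M)

abbreviation depth :: nat where
  "depth \<equiv> m - t"

definition Y :: "nat \<Rightarrow> 'a \<Rightarrow> real ^ 'd" where
  "Y i \<omega> = (\<chi> k. scramble b depth (\<pi> k \<omega>) (y k i \<omega>) (P i $ k))"

definition point_digits :: "nat \<Rightarrow> 'd \<Rightarrow> nat list" where
  "point_digits i k = digit_prefix b (P i $ k) depth"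

abbreviation digit_cube :: "('d \<Rightarrow> nat list) \<Rightarrow> (real ^ 'd) set" where
  "digit_cube q \<equiv> elem_box b (\<lambda>_. depth) (\<lambda>k. nat_of_digits b (q k))"

definition cube_point :: "('d \<Rightarrow> nat list) \<Rightarrow> nat \<Rightarrow> 'a \<Rightarrow> real ^ 'd" where
  "cube_point q i \<omega> = (\<chi> k. real (nat_of_digits b (q k)) / real b ^ depth + 1 / real b ^ depth * y k i \<omega>)"

definition basic_events :: "('d \<times> nat) + ('d \<times> nat) \<Rightarrow> 'a set set" where
  "basic_events x = (case x of
      Inl (k, j) \<Rightarrow> {(\<lambda>\<omega>. perm_family b (\<pi> k \<omega>) j) -` A \<inter> space M | A. True}
    | Inr (k, n) \<Rightarrow> {y k n -` B \<inter> space M | B. B \<in> sets borel})"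

definition basic_indices :: "(('d \<times> nat) + ('d \<times> nat)) set" where
  "basic_indices = Inl ` (UNIV \<times> {..<depth}) \<union> Inr ` (UNIV \<times> {..<b ^ m})"

lemma indep_basic_events: "indep_sets basic_events basic_indices"
  using indep unfolding basic_events_def basic_indices_def .

lemma perm_event_in_basic_events: "{\<omega>\<in>space M. \<Phi> (perm_family b (\<pi> k \<omega>) j)} \<in> basic_events (Inl (k, j))"
  unfolding basic_events_def by (auto intro!: exI[of _ "{f. \<Phi> f}"])

lemma value_event_in_basic_events: "B \<in> sets borel \<Longrightarrow> {\<omega>\<in>space M. y k n \<omega> \<in> B} \<in> basic_events (Inr (k, n))"
  unfolding basic_events_def by (auto intro!: exI[of _ B])

lemma perm_tree_perms: "\<omega> \<in> space M \<Longrightarrow> perm_tree b depth (\<pi> k \<omega>)"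
  unfolding perm_tree_def digit_strings_def using perm by auto

lemma P_range: "i < b ^ m \<Longrightarrow> P i $ k \<in> {0..<1}"
  using net unfolding is_net_def unit_cube_def by auto

lemma point_digits_in_digit_strings: "point_digits i k \<in> digit_strings b depth"
  unfolding point_digits_def using digit_prefix_in_digit_strings[OF b] .

lemma prob_perm_family_eq:
  assumes "j < depth" "p \<in> digit_strings b j" "c < b" "v < b"
  shows "prob {\<omega>\<in>space M. perm_family b (\<pi> k \<omega>) j p c = v} = 1 / real b"
proof -
  have "{\<omega>\<in>space M. perm_family b (\<pi> k \<omega>) j p c = v} = {\<omega>\<in>space M. \<pi> k \<omega> p c = v}"
    using assms by (simp add: perm_family_def digit_strings_def)
  then show ?thesis
    using single_fold assms by (simp add: digit_strings_def)
qed

lemma Int_stable_basic_events: "Int_stable (basic_events x)"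
proof (cases x)
  case (Inl kj)
  then show ?thesis
    using Int_stable_vimage_family[of UNIV] by (cases kj) (simp add: basic_events_def)
next
  case (Inr kn)
  then show ?thesis
    using Int_stable_vimage_family[of "sets borel", OF sets.Int] by (cases kn) (simp add: basic_events_def)
qed

lemma basic_events_subset: "basic_events x \<subseteq> Pow (space M)"
  unfolding basic_events_def by (auto split: sum.split)

lemma perm_value_measurable:
  assumes "j < depth" "p \<in> digit_strings b j" "c < b"
  shows "(\<lambda>\<omega>. real (\<pi> k \<omega> p c)) \<in> borel_measurable M"
proof -
  have "(\<lambda>\<omega>. real (\<pi> k \<omega> p c)) = (\<lambda>f. real (f p c)) \<circ> (\<lambda>\<omega>. perm_family b (\<pi> k \<omega>) j)"
    using assms by (auto simp: fun_eq_iff perm_family_def digit_strings_def)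
  then show ?thesis
    using measurable_comp[OF perm_measurable[OF assms(1)] borel_measurable_count_space] by simp
qed

lemma Y_measurable:
  assumes "i < b ^ m"
  shows "Y i \<in> borel_measurable M"
  unfolding Y_def scramble_def
proof (intro borel_measurable_vec_lambda borel_measurable_add borel_measurable_sum borel_measurable_divide)
  fix k j assume "j \<in> {1..depth}"
  then show "(\<lambda>\<omega>. real (\<pi> k \<omega> (digit_prefix b (P i $ k) (j - 1)) (digit b (P i $ k) j))) \<in> borel_measurable M"
    by (intro perm_value_measurable[of "j - 1"] digit_prefix_in_digit_strings digit_less b) auto
qed (use y_measurable[OF assms] in simp_all)

lemma Y_in_unit_cube: "i < b ^ m \<Longrightarrow> \<omega> \<in> space M \<Longrightarrow> Y i \<omega> \<in> unit_cube"
  using scramble_in_unit_interval[OF perm_tree_perms b P_range y_range] by (simp add: Y_def unit_cube_def)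

lemma is_net_Y: "\<omega> \<in> space M \<Longrightarrow> is_net b t m (\<lambda>i. Y i \<omega>)"
  unfolding Y_def by (rule is_net_scramble[OF b net perm_tree_perms]) (use y_range in auto)

lemma Y_in_basic_cube_iff:
  assumes "i < b ^ m" "\<omega> \<in> space M" "\<And>k. Q k \<in> digit_strings b depth"
  shows "Y i \<omega> \<in> digit_cube Q
    \<longleftrightarrow> (\<forall>k. scramble_digits (\<pi> k \<omega>) (point_digits i k) = Q k)"
  unfolding elem_box_eq Y_def point_digits_def
  using scramble_mem_adic_interval_iff[OF perm_tree_perms[OF assms(2)] b P_range[OF assms(1)]
      y_range[OF assms(1,2)] order_refl assms(3)]
  by simp

lemma Y_in_basic_cube_iff_perm_family:
  assumes "i < b ^ m" "\<omega> \<in> space M" "\<And>k. Q k \<in> digit_strings b depth"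
  shows "Y i \<omega> \<in> digit_cube Q
    \<longleftrightarrow> (\<forall>k. \<forall>j<depth. perm_family b (\<pi> k \<omega>) j (take j (point_digits i k)) (point_digits i k ! j) = Q k ! j)"
  unfolding Y_in_basic_cube_iff[OF assms]
  using scramble_digits_eq_iff_perm_family[OF point_digits_in_digit_strings] assms(3) by (simp add: digit_strings_def)

lemma Y_eq_cube_point:
  assumes "i < b ^ m" "\<omega> \<in> space M" "\<And>k. Q k \<in> digit_strings b depth" "Y i \<omega> \<in> digit_cube Q"
  shows "Y i \<omega> = cube_point Q i \<omega>"
  using assms(4) unfolding Y_in_basic_cube_iff[OF assms(1-3)]
  by (simp add: Y_def point_digits_def cube_point_def scramble_eq[OF b] vec_eq_iff add_divide_distrib)

lemma prob_Y_in_basic_cube: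
  assumes "i < b ^ m" "basic_cube b t m C"
  shows "prob {\<omega>\<in>space M. Y i \<omega> \<in> C} = 1 / real b ^ (CARD('d) * depth)"
proof -
  obtain Q where Q: "\<And>k. Q k \<in> digit_strings b depth" "C = digit_cube Q"
    using basic_cubeE[OF b assms(2)] by blast
  define D where "D = point_digits i"
  define \<Phi> where "\<Phi> = (\<lambda>(k, j) \<omega>. perm_family b (\<pi> k \<omega>) j (take j (D k)) (D k ! j) = Q k ! j)"
  have "{\<omega>\<in>space M. Y i \<omega> \<in> C} = {\<omega>\<in>space M. \<forall>kj\<in>UNIV \<times> {..<depth}. \<Phi> kj \<omega>}"
    using Y_in_basic_cube_iff_perm_family[OF assms(1) _ Q(1)] by (auto simp: Q(2) \<Phi>_def D_def)
  also have "prob \<dots> = (\<Prod>kj\<in>UNIV \<times> {..<depth}. prob {\<omega>\<in>space M. \<Phi> kj \<omega>})"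
    by (rule prob_Collect_All_indep_sets[OF indep_basic_events])
      (auto simp: basic_indices_def \<Phi>_def intro: perm_event_in_basic_events)
  also have "\<dots> = (\<Prod>kj\<in>(UNIV :: 'd set) \<times> {..<depth}. 1 / real b)"
  proof (rule prod.cong[OF refl])
    fix kj :: "'d \<times> nat" assume "kj \<in> UNIV \<times> {..<depth}"
    then obtain k j where "kj = (k, j)" "j < depth"
      by blast
    then show "prob {\<omega>\<in>space M. \<Phi> kj \<omega>} = 1 / real b"
      unfolding \<Phi>_def D_def
      using nth_digit_strings_less[OF point_digits_in_digit_strings] nth_digit_strings_less[OF Q(1)]
      by (auto intro!: prob_perm_family_eq take_in_digit_strings point_digits_in_digit_strings)
  qed
  also have "\<dots> = 1 / real b ^ (CARD('d) * depth)"
    by (simp add: card_cartesian_product power_one_over)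
  finally show ?thesis .
qed

text \<open>The block None collects all permutation families, the block Some n the values
  y k n attached to the n-th point.\<close>

definition block :: "nat option \<Rightarrow> (('d \<times> nat) + ('d \<times> nat)) set" where
  "block g = (case g of None \<Rightarrow> Inl ` (UNIV \<times> {..<depth}) | Some n \<Rightarrow> Inr ` (UNIV \<times> {n}))"

abbreviation block_events :: "nat option \<Rightarrow> 'a set set" where
  "block_events g \<equiv> sigma_sets (space M) (\<Union>x\<in>block g. basic_events x)"

lemma indep_block_events: "indep_sets block_events (insert None (Some ` {..<b ^ m}))"
proof (rule indep_sets_collect_sigma)
  have "(\<Union>g\<in>insert None (Some ` {..<b ^ m}). block g) = basic_indices"
    by (auto simp: block_def basic_indices_def)
  then show "indep_sets basic_events (\<Union>g\<in>insert None (Some ` {..<b ^ m}). block g)"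
    using indep_basic_events by simp
  show "disjoint_family_on block (insert None (Some ` {..<b ^ m}))"
    by (auto simp: disjoint_family_on_def block_def split: option.splits)
qed (rule Int_stable_basic_events)

lemma basic_cubes_event_in_block_None:
  assumes "finite J" "\<And>j k. j \<in> J \<Longrightarrow> Q j k \<in> digit_strings b depth" "J \<subseteq> {..<b ^ m}"
  shows "{\<omega>\<in>space M. \<forall>j\<in>J. Y j \<omega> \<in> digit_cube (Q j)} \<in> block_events None"
proof -
  define \<Psi> where "\<Psi> = (\<lambda>(k, d) \<omega>. \<forall>j\<in>J.
    perm_family b (\<pi> k \<omega>) d (take d (point_digits j k)) (point_digits j k ! d) = Q j k ! d)"
  interpret sigma_algebra "space M" "block_events None"
    using basic_events_subset by (intro sigma_algebra_sigma_sets) blast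
  have "{\<omega>\<in>space M. \<forall>kd\<in>UNIV \<times> {..<depth}. \<Psi> kd \<omega>} \<in> block_events None"
  proof (rule sets_Collect_finite_All)
    fix kd :: "'d \<times> nat" assume "kd \<in> UNIV \<times> {..<depth}"
    then have "{\<omega>\<in>space M. \<Psi> kd \<omega>} \<in> basic_events (Inl kd)" "Inl kd \<in> block None"
      by (auto simp: \<Psi>_def block_def intro: perm_event_in_basic_events)
    then show "{\<omega>\<in>space M. \<Psi> kd \<omega>} \<in> block_events None"
      by blast
  qed simp
  moreover have "{\<omega>\<in>space M. \<forall>j\<in>J. Y j \<omega> \<in> digit_cube (Q j)}
      = {\<omega>\<in>space M. \<forall>kd\<in>UNIV \<times> {..<depth}. \<Psi> kd \<omega>}"
  proof (intro Collect_cong conj_cong refl)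
    fix \<omega> assume "\<omega> \<in> space M"
    then have "Y j \<omega> \<in> digit_cube (Q j)
        \<longleftrightarrow> (\<forall>k. \<forall>d<depth. perm_family b (\<pi> k \<omega>) d (take d (point_digits j k)) (point_digits j k ! d) = Q j k ! d)"
      if "j \<in> J" for j
      using Y_in_basic_cube_iff_perm_family assms(2,3) that by blast
    then show "(\<forall>j\<in>J. Y j \<omega> \<in> digit_cube (Q j))
        \<longleftrightarrow> (\<forall>kd\<in>UNIV \<times> {..<depth}. \<Psi> kd \<omega>)"
      by (auto simp: \<Psi>_def)
  qed
  ultimately show ?thesis
    by simp
qed

lemma offset_event_in_block_Some:
  assumes "n < b ^ m" "A \<in> sets borel"
  shows "{\<omega>\<in>space M. (\<chi> k. c k + \<delta> * y k n \<omega>) \<in> A} \<in> block_events (Some n)"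
proof -
  let ?N = "sigma (space M) (\<Union>x\<in>block (Some n). basic_events x)"
  have sets_N: "sets ?N = block_events (Some n)" and space_N: "space ?N = space M"
    using basic_events_subset by (simp_all add: sets_measure_of space_measure_of_conv UN_subset_iff)
  have "y k n \<in> borel_measurable ?N" for k
  proof (rule measurableI)
    fix B :: "real set" assume "B \<in> sets borel"
    then have "y k n -` B \<inter> space M \<in> basic_events (Inr (k, n))"
      using value_event_in_basic_events by (simp add: vimage_def Int_def conj_commute)
    then show "y k n -` B \<inter> space ?N \<in> sets ?N"
      unfolding sets_N space_N by (auto simp: block_def)
  qed simp
  then have "(\<lambda>\<omega>. \<chi> k. c k + \<delta> * y k n \<omega>) \<in> borel_measurable ?N"
    by (intro borel_measurable_vec_lambda) simp
  from measurable_sets[OF this assms(2)] show ?thesis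
    unfolding sets_N space_N by (simp add: vimage_def Int_def conj_commute)
qed

lemma prob_offset_in:
  assumes "n < b ^ m" "\<delta> > 0" "A \<in> sets borel"
  shows "prob {\<omega>\<in>space M. (\<chi> k. c k + \<delta> * y k n \<omega>) \<in> A}
    = measure lborel (A \<inter> {x. \<forall>k. x $ k \<in> {c k..<c k + \<delta>}}) / measure lborel {x. \<forall>k. x $ k \<in> {c k..<c k + \<delta>}}"
proof -
  let ?W = "\<lambda>\<omega>. \<chi> k. c k + \<delta> * y k n \<omega>"
  let ?box = "{x::real^'d. \<forall>k. x $ k \<in> {c k..<c k + \<delta>}}"
  have indep_y: "prob {\<omega>\<in>space M. \<forall>k. y k n \<omega> \<in> B k} = (\<Prod>k\<in>UNIV. prob {\<omega>\<in>space M. y k n \<omega> \<in> B k})"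
    if "\<And>k. B k \<in> sets borel" for B
  proof -
    have "prob {\<omega>\<in>space M. \<forall>k\<in>UNIV. y k n \<omega> \<in> B k} = (\<Prod>k\<in>UNIV. prob {\<omega>\<in>space M. y k n \<omega> \<in> B k})"
      by (rule prob_Collect_All_indep_sets[OF indep_basic_events, where g="\<lambda>k. Inr (k, n)"])
        (use that assms(1) in \<open>auto simp: basic_indices_def inj_on_def intro: value_event_in_basic_events\<close>)
    then show ?thesis
      by simp
  qed
  have "?W \<in> borel_measurable M"
    using y_measurable[OF assms(1)] by (intro borel_measurable_vec_lambda) simp
  then have "prob {\<omega>\<in>space M. ?W \<omega> \<in> A} = measure (distr M borel ?W) A"
    using assms(3) by (subst measure_distr) (auto simp: vimage_def Int_def conj_commute)
  also have "distr M borel ?W = uniform_measure lborel ?box"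
    using assms(2) y_measurable[OF assms(1)] y_uniform[OF assms(1)] indep_y
    by (rule distr_vec_uniform_Ico_box)
  also have "measure (uniform_measure lborel ?box) A = measure lborel (?box \<inter> A) / measure lborel ?box"
    using emeasure_lborel_Ico_box_cart[of c "\<lambda>k. c k + \<delta>"] assms(2,3)
    by (intro measure_uniform_measure) auto
  finally show ?thesis
    by (simp add: Int_commute)
qed

lemma cube_point_event_in_block_Some:
  "n < b ^ m \<Longrightarrow> A \<in> sets borel \<Longrightarrow> {\<omega>\<in>space M. cube_point q n \<omega> \<in> A} \<in> block_events (Some n)"
  unfolding cube_point_def by (rule offset_event_in_block_Some)

lemma prob_cube_point_in:
  assumes "n < b ^ m" "A \<in> sets borel"
  shows "prob {\<omega>\<in>space M. cube_point q n \<omega> \<in> A} = measure lborel (A \<inter> digit_cube q) / measure lborel (digit_cube q)"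
proof -
  let ?c = "\<lambda>k. real (nat_of_digits b (q k)) / real b ^ depth" and ?\<delta> = "1 / real b ^ depth"
  have cube: "digit_cube q = {x. \<forall>k. x $ k \<in> {?c k..<?c k + ?\<delta>}}"
    by (simp add: elem_box_def add_divide_distrib)
  have "prob {\<omega>\<in>space M. (\<chi> k. ?c k + ?\<delta> * y k n \<omega>) \<in> A}
      = measure lborel (A \<inter> {x. \<forall>k. x $ k \<in> {?c k..<?c k + ?\<delta>}}) / measure lborel {x. \<forall>k. x $ k \<in> {?c k..<?c k + ?\<delta>}}"
    using b by (intro prob_offset_in assms) simp
  then show ?thesis
    unfolding cube_point_def cube .
qed

lemma prob_Y_in_basic_cubes_Int:
  assumes A: "A \<in> sets borel" and J: "J \<subseteq> {..<b ^ m}"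
    and Q: "\<And>j k. j \<in> J \<Longrightarrow> Q j k \<in> digit_strings b depth"
  shows "prob {\<omega>\<in>space M. \<forall>j\<in>J. Y j \<omega> \<in> A \<inter> digit_cube (Q j)}
    = prob {\<omega>\<in>space M. \<forall>j\<in>J. Y j \<omega> \<in> digit_cube (Q j)}
      * (\<Prod>j\<in>J. measure lborel (A \<inter> digit_cube (Q j)) / measure lborel (digit_cube (Q j)))"
proof -
  have "finite J"
    using J finite_subset by blast
  define G where "G = {\<omega>\<in>space M. \<forall>j\<in>J. Y j \<omega> \<in> digit_cube (Q j)}"
  define \<Phi> where "\<Phi> g \<omega> = (case g of None \<Rightarrow> \<omega> \<in> G | Some j \<Rightarrow> cube_point (Q j) j \<omega> \<in> A)" for g \<omega>
  have "{\<omega>\<in>space M. \<forall>j\<in>J. Y j \<omega> \<in> A \<inter> digit_cube (Q j)} = {\<omega>\<in>space M. \<forall>g\<in>insert None (Some ` J). \<Phi> g \<omega>}"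
    using Y_eq_cube_point Q J by (auto 0 4 simp: \<Phi>_def G_def)
  also have "prob \<dots> = (\<Prod>g\<in>insert None (Some ` J). prob {\<omega>\<in>space M. \<Phi> g \<omega>})"
  proof (rule prob_Collect_All_indep_sets[OF indep_block_events, where g=id])
    fix g assume "g \<in> insert None (Some ` J)"
    then show "{\<omega>\<in>space M. \<Phi> g \<omega>} \<in> block_events (id g)"
    proof safe
      show "{\<omega>\<in>space M. \<Phi> None \<omega>} \<in> block_events (id None)"
        using basic_cubes_event_in_block_None[OF \<open>finite J\<close> Q J]
        by (simp add: \<Phi>_def G_def cong: Collect_cong)
      show "{\<omega>\<in>space M. \<Phi> (Some j) \<omega>} \<in> block_events (id (Some j))" if "j \<in> J" for j
        using cube_point_event_in_block_Some that J A by (auto simp: \<Phi>_def)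
    qed
  qed (use J \<open>finite J\<close> in auto)
  also have "\<dots> = prob G * (\<Prod>j\<in>J. prob {\<omega>\<in>space M. cube_point (Q j) j \<omega> \<in> A})"
    using \<open>finite J\<close> by (simp add: prod.reindex \<Phi>_def G_def)
  finally show ?thesis
    using prob_cube_point_in A J by (simp add: G_def subset_eq)
qed

lemma cond_prob_Y_basic_cubes:
  assumes A: "A \<in> sets lborel" and J: "J \<subseteq> {..<b ^ m}"
    and C: "\<forall>j\<in>J. basic_cube b t m (C j)"
    and pos: "prob {\<omega>\<in>space M. \<forall>j\<in>J. Y j \<omega> \<in> C j} > 0"
  shows "prob {\<omega>\<in>space M. \<forall>j\<in>J. Y j \<omega> \<in> A \<inter> C j} / prob {\<omega>\<in>space M. \<forall>j\<in>J. Y j \<omega> \<in> C j}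
      = (\<Prod>j\<in>J. measure lborel (A \<inter> C j) / measure lborel (C j))"
proof -
  have "\<forall>j\<in>J. \<exists>Qj. (\<forall>k. Qj k \<in> digit_strings b depth) \<and> C j = digit_cube Qj"
    using basic_cubeE[OF b] C by metis
  from bchoice[OF this] obtain Q where Q: "\<And>j k. j \<in> J \<Longrightarrow> Q j k \<in> digit_strings b depth"
    "\<And>j. j \<in> J \<Longrightarrow> C j = digit_cube (Q j)"
    by blast
  have "prob {\<omega>\<in>space M. \<forall>j\<in>J. Y j \<omega> \<in> A \<inter> C j}
      = prob {\<omega>\<in>space M. \<forall>j\<in>J. Y j \<omega> \<in> C j} * (\<Prod>j\<in>J. measure lborel (A \<inter> C j) / measure lborel (C j))"
    using prob_Y_in_basic_cubes_Int[OF _ J Q(1)] A Q(2) by (simp cong: Collect_cong prod.cong)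
  then show ?thesis
    using pos by simp
qed

end

theorem proposition3p6:
  fixes M :: "'a measure"
    and b t m :: nat
    and P :: "nat \<Rightarrow> real ^ 'd"
    and \<pi> :: "'d \<Rightarrow> 'a \<Rightarrow> nat list \<Rightarrow> nat \<Rightarrow> nat"
    and y :: "'d \<Rightarrow> nat \<Rightarrow> 'a \<Rightarrow> real"
  assumes "prob_space M"
    and "CARD('d) \<ge> 2" and "b \<ge> 2" and "t \<le> m"
    and "is_net b t m P"
    \<comment> \<open>each pi k omega p is a permutation of {0..b-1}\<close>
    and "\<And>k \<omega> p. \<omega> \<in> space M \<Longrightarrow> length p < m - t \<Longrightarrow> set p \<subseteq> {..<b} \<Longrightarrow>
           bij_betw (\<pi> k \<omega> p) {..<b} {..<b}"
    \<comment> \<open>the permutation families (per coordinate and digit) are random variables\<close>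
    and "\<And>k j. j < m - t \<Longrightarrow>
           (\<lambda>\<omega>. perm_family b (\<pi> k \<omega>) j) \<in> measurable M (count_space UNIV)"
    \<comment> \<open>single-fold uniformity\<close>
    and "\<And>k p i j. length p < m - t \<Longrightarrow> set p \<subseteq> {..<b} \<Longrightarrow> i < b \<Longrightarrow> j < b \<Longrightarrow>
           measure M {\<omega>\<in>space M. \<pi> k \<omega> p i = j} = 1 / real b"
    \<comment> \<open>the values y are uniform on [0,1)\<close>
    and "\<And>k n \<omega>. n < b ^ m \<Longrightarrow> \<omega> \<in> space M \<Longrightarrow> y k n \<omega> \<in> {0..<1}"
    and "\<And>k n. n < b ^ m \<Longrightarrow> y k n \<in> borel_measurable M"
    and "\<And>k n. n < b ^ m \<Longrightarrow> distr M lborel (y k n) = uniform_measure lborel {0..<1}"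
    \<comment> \<open>mutual independence: different coordinates, different digits, and the y values\<close>
    and "prob_space.indep_sets M
           (\<lambda>x. case x of
                   Inl (k, j) \<Rightarrow> {(\<lambda>\<omega>. perm_family b (\<pi> k \<omega>) j) -` A \<inter> space M | A. True}
                 | Inr (k, n) \<Rightarrow> {y k n -` B \<inter> space M | B. B \<in> sets borel})
           (Inl ` (UNIV \<times> {..<m - t}) \<union> Inr ` (UNIV \<times> {..<b ^ m}))"
  shows "abstract_scrambled_net M b t m
           (\<lambda>i \<omega>. \<chi> k. scramble b (m - t) (\<pi> k \<omega>) (y k i \<omega>) (P i $ k))"
proof -
  have "b > 0"
    using assms(3) by simp
  interpret random_scrambling M b t m P \<pi> y
    by (rule random_scrambling.intro) (fact assms \<open>b > 0\<close>)+
  have Y_eq: "(\<lambda>i \<omega>. \<chi> k. scramble b (m - t) (\<pi> k \<omega>) (y k i \<omega>) (P i $ k)) = Y"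
    by (simp add: Y_def fun_eq_iff)
  show ?thesis
    unfolding Y_eq abstract_scrambled_net_def
    using Y_measurable Y_in_unit_cube prob_Y_in_basic_cube cond_prob_Y_basic_cubes
    by (auto intro!: AE_I2 is_net_Y)
qed

end
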